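(* Let $G$ be a connected graph and let $x\in V(G)$ be a vertex with $d(x)=\Delta(G)\le |G|-2$. If $V(G)\setminus N[x]$ is an independent set in $G$, then $G$ admits an antimagic orientation.
   Context: All graphs are finite and simple; $|G|$ is the number of vertices, $\Delta(G)$ the maximum degree, $N(v)$ the set of neighbours of $v$, and $N[v]=N(v)\cup\{v\}$. For a digraph $D$ and an injective map $\tau$ from the arc set $A(D)$ to positive integers, $s_{(D,\tau)}(u)$ is the sum of labels of arcs entering $u$ minus the sum of labels of arcs leaving $u$ ($0$ if $u$ is isolated). If $D$ has $m$ arcs, a bijection $\tau:A(D)\to\{1,\dots,m\}$ is an antimagic labeling if the values $s_{(D,\tau)}(u)$ are pairwise distinct over all vertices. $G$ admits an antimagic orientation if some orientation $D$ of $G$ has an antimagic labeling. *)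

theory Defs
  imports Main
begin

definition simple_graph :: "'a set \<Rightarrow> 'a set set \<Rightarrow> bool" where
  "simple_graph V E \<longleftrightarrow> finite V \<and> (\<forall>e\<in>E. \<exists>u v. e = {u, v} \<and> u \<noteq> v \<and> u \<in> V \<and> v \<in> V)"

definition neighbors :: "'a set set \<Rightarrow> 'a \<Rightarrow> 'a set" where
  "neighbors E v = {u. {u, v} \<in> E}"

definition degree :: "'a set set \<Rightarrow> 'a \<Rightarrow> nat" where
  "degree E v = card (neighbors E v)"

definition max_degree :: "'a set \<Rightarrow> 'a set set \<Rightarrow> nat" where
  "max_degree V E = Max (degree E ` V)"

definition connected_graph :: "'a set \<Rightarrow> 'a set set \<Rightarrow> bool" where
  "connected_graph V E \<longleftrightarrow> V \<noteq> {} \<and>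
     (\<forall>u\<in>V. \<forall>v\<in>V. (u, v) \<in> {(a, b). {a, b} \<in> E}\<^sup>*)"

definition independent_set :: "'a set set \<Rightarrow> 'a set \<Rightarrow> bool" where
  "independent_set E S \<longleftrightarrow> (\<forall>u\<in>S. \<forall>v\<in>S. {u, v} \<notin> E)"

definition is_orientation :: "'a set set \<Rightarrow> ('a \<times> 'a) set \<Rightarrow> bool" where
  "is_orientation E D \<longleftrightarrow>
     (\<forall>(u, v)\<in>D. {u, v} \<in> E) \<and>
     (\<forall>e\<in>E. \<exists>!a\<in>D. e = {fst a, snd a})"

definition vertex_sum :: "('a \<times> 'a) set \<Rightarrow> ('a \<times> 'a \<Rightarrow> nat) \<Rightarrow> 'a \<Rightarrow> int" where
  "vertex_sum D \<tau> u =
     (\<Sum>a\<in>{a\<in>D. snd a = u}. int (\<tau> a)) - (\<Sum>a\<in>{a\<in>D. fst a = u}. int (\<tau> a))"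

definition antimagic_labeling :: "'a set \<Rightarrow> ('a \<times> 'a) set \<Rightarrow> ('a \<times> 'a \<Rightarrow> nat) \<Rightarrow> bool" where
  "antimagic_labeling V D \<tau> \<longleftrightarrow>
     bij_betw \<tau> D {1..card D} \<and> inj_on (vertex_sum D \<tau>) V"

definition has_antimagic_orientation :: "'a set \<Rightarrow> 'a set set \<Rightarrow> bool" where
  "has_antimagic_orientation V E \<longleftrightarrow>
     (\<exists>D \<tau>. is_orientation E D \<and> antimagic_labeling V D \<tau>)"

end

theory Submission
  imports Defs
begin

text \<open>Let \<open>N = N(x)\<close> and \<open>R = V \<setminus> N[x]\<close>. Since \<open>R\<close> is independent, every edge lies inside
  \<open>N\<close>, joins \<open>R\<close> to \<open>N\<close>, or contains \<open>x\<close>. The edges inside \<open>N\<close> are oriented and labelled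
  \<open>1, \<dots>, m\<close> so that every vertex sum is at least \<open>-m\<close>. The edges at \<open>R\<close> are oriented away
  from \<open>R\<close> and receive the next labels, block by block in order of degree, so that the (negative)
  sums on \<open>R\<close> are distinct; the edges at \<open>x\<close> are oriented away from \<open>x\<close> and receive the
  largest labels, in the order of the sums already present on \<open>N\<close>, so that the sums on \<open>N\<close>
  become distinct and positive. As \<open>d(r) \<le> \<Delta> = d(x)\<close> for \<open>r \<in> R\<close>, the sum at \<open>x\<close> lies below all
  sums on \<open>R\<close>, which in turn lie below those on \<open>N\<close>.\<close>

abbreviation undirected :: "'a \<times> 'a \<Rightarrow> 'a set" where
  "undirected a \<equiv> {fst a, snd a}"

abbreviation labeling :: "('a \<times> 'a) set \<Rightarrow> ('a \<times> 'a \<Rightarrow> nat) \<Rightarrow> bool" where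
  "labeling D \<tau> \<equiv> bij_betw \<tau> D {1..card D}"

lemma vertex_sum_Un_disjoint:
  assumes "finite A" "finite B" "A \<inter> B = {}"
  shows "vertex_sum (A \<union> B) \<tau> u = vertex_sum A \<tau> u + vertex_sum B \<tau> u"
proof -
  have "{a \<in> A \<union> B. snd a = u} = {a\<in>A. snd a = u} \<union> {a\<in>B. snd a = u}"
       "{a \<in> A \<union> B. fst a = u} = {a\<in>A. fst a = u} \<union> {a\<in>B. fst a = u}" by auto
  then show ?thesis
    unfolding vertex_sum_def using assms by (simp add: sum.union_disjoint disjoint_iff)
qed

lemma vertex_sum_cong:
  assumes "\<And>a. a \<in> D \<Longrightarrow> \<tau> a = \<tau>' a"
  shows "vertex_sum D \<tau> u = vertex_sum D \<tau>' u"
  unfolding vertex_sum_def using assms by (intro arg_cong2[where f="(-)"] sum.cong) auto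

lemma vertex_sum_not_incident:
  assumes "\<And>a. a \<in> D \<Longrightarrow> fst a \<noteq> u \<and> snd a \<noteq> u"
  shows "vertex_sum D \<tau> u = 0"
proof -
  have h: "{a\<in>D. snd a = u} = {}" "{a\<in>D. fst a = u} = {}" using assms by auto
  show ?thesis unfolding vertex_sum_def h by simp
qed

lemma vertex_sum_nonneg_if_no_tail:
  assumes "\<And>a. a \<in> D \<Longrightarrow> fst a \<noteq> u"
  shows "vertex_sum D \<tau> u \<ge> 0"
proof -
  have h: "{a\<in>D. fst a = u} = {}" using assms by auto
  show ?thesis unfolding vertex_sum_def h by (simp add: sum_nonneg)
qed

lemma vertex_sum_insert:
  assumes "finite D" "a \<notin> D"
  shows "vertex_sum (insert a D) \<tau> u = vertex_sum D \<tau> u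
     + (if snd a = u then int (\<tau> a) else 0) - (if fst a = u then int (\<tau> a) else 0)"
proof -
  have "{b\<in>{a}. snd b = u} = (if snd a = u then {a} else {})"
       "{b\<in>{a}. fst b = u} = (if fst a = u then {a} else {})" by auto
  then have "vertex_sum {a} \<tau> u
      = (if snd a = u then int (\<tau> a) else 0) - (if fst a = u then int (\<tau> a) else 0)"
    unfolding vertex_sum_def by simp
  moreover have "vertex_sum (D \<union> {a}) \<tau> u = vertex_sum D \<tau> u + vertex_sum {a} \<tau> u"
    using assms by (intro vertex_sum_Un_disjoint) auto
  ultimately show ?thesis by simp
qed

lemma is_orientation_if_bij_betw:
  assumes "bij_betw undirected D E"
  shows "is_orientation E D"
  unfolding is_orientation_def
proof (intro conjI ballI)
  fix p assume "p \<in> D"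
  then show "case p of (u, v) \<Rightarrow> {u, v} \<in> E"
    using assms by (cases p) (force simp: bij_betw_def)
next
  fix e assume "e \<in> E"
  then obtain a where a: "a \<in> D" "e = undirected a" using assms by (auto simp: bij_betw_def)
  then show "\<exists>!a. a \<in> D \<and> e = undirected a"
    using assms unfolding bij_betw_def inj_on_def by blast
qed

lemma labeling_insert:
  assumes "finite D" "labeling D \<tau>" "a \<notin> D"
  shows "labeling (insert a D) (\<tau>(a := Suc (card D)))"
proof -
  have "bij_betw (\<tau>(a := Suc (card D))) D {1..card D}"
    by (rule bij_betw_cong[THEN iffD2, OF _ assms(2)]) (use assms(3) in auto)
  then have "bij_betw (\<tau>(a := Suc (card D))) (D \<union> {a}) ({1..card D} \<union> {Suc (card D)})"
    by (rule bij_betw_combine) auto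
  moreover have "{1..card D} \<union> {Suc (card D)} = {1..card (insert a D)}" using assms by auto
  ultimately show ?thesis by simp
qed

lemma ex_edge_towards:
  assumes "F \<noteq> {}" "\<forall>e\<in>F. \<exists>u v. e = {u, v} \<and> u \<noteq> v"
  obtains w y where "{w, y} \<in> F" "w \<noteq> y" "(\<exists>e\<in>F. z \<in> e) \<Longrightarrow> y = z"
proof (cases "\<exists>e\<in>F. z \<in> e")
  case True
  then obtain e where e: "e \<in> F" "z \<in> e" by blast
  with assms(2) obtain a b where ab: "e = {a, b}" "a \<noteq> b" by blast
  from ab e(2) consider "a = z" | "b = z" by blast
  then show ?thesis
  proof cases
    case 1
    show ?thesis
    proof (rule that)
      show "{b, z} \<in> F" using ab 1 e(1) by (simp add: insert_commute)
    qed (use ab 1 in auto)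
  next
    case 2
    show ?thesis
    proof (rule that)
      show "{a, z} \<in> F" using ab 2 e(1) by simp
    qed (use ab 2 in auto)
  qed
next
  case False
  obtain e where "e \<in> F" using assms(1) by blast
  with assms(2) obtain u v where "e = {u, v}" "u \<noteq> v" by blast
  then show ?thesis using False \<open>e \<in> F\<close> by (intro that) simp_all
qed

lemma labeled_orientation_insert_arc:
  assumes "finite F" "{w, y} \<in> F" "w \<noteq> y"
    and D: "bij_betw undirected D (F - {{w, y}})" "labeling D \<tau>"
  shows "bij_betw undirected (insert (w, y) D) F"
    and "labeling (insert (w, y) D) (\<tau>((w, y) := card F))"
    and "vertex_sum (insert (w, y) D) (\<tau>((w, y) := card F)) u
           = vertex_sum D \<tau> u + (if y = u then int (card F) else 0) - (if w = u then int (card F) else 0)"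
proof -
  have fin: "finite D" using D(1) assms(1) bij_betw_finite by blast
  have card_F: "card F = Suc (card D)"
    using bij_betw_same_card[OF D(1)] card_Suc_Diff1[OF assms(1,2)] by simp
  have new: "(w, y) \<notin> D"
  proof
    assume "(w, y) \<in> D"
    then have "undirected (w, y) \<in> F - {{w, y}}" using bij_betw_imp_surj_on[OF D(1)] by blast
    then show False by simp
  qed
  have "bij_betw undirected (D \<union> {(w, y)}) ((F - {{w, y}}) \<union> {{w, y}})"
    by (rule bij_betw_combine[OF D(1)]) auto
  moreover have "(F - {{w, y}}) \<union> {{w, y}} = F" using assms(2) by auto
  ultimately show "bij_betw undirected (insert (w, y) D) F" by simp
  show "labeling (insert (w, y) D) (\<tau>((w, y) := card F))"
    unfolding card_F using fin D(2) new by (rule labeling_insert)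
  have "vertex_sum D (\<tau>((w, y) := card F)) u = vertex_sum D \<tau> u"
    using new by (intro vertex_sum_cong) auto
  moreover have "(\<tau>((w, y) := card F)) (w, y) = card F" by simp
  ultimately show "vertex_sum (insert (w, y) D) (\<tau>((w, y) := card F)) u
      = vertex_sum D \<tau> u + (if y = u then int (card F) else 0) - (if w = u then int (card F) else 0)"
    using vertex_sum_insert[OF fin new, of "\<tau>((w, y) := card F)" u] by (simp only: fst_conv snd_conv)
qed

text \<open>Orient the edges one at a time, the last one with the largest label, from a vertex whose
  sum was kept nonnegative towards the distinguished vertex \<open>z\<close> whenever \<open>z\<close> is covered.\<close>
lemma exists_labeled_orientation_vertex_sum_ge:
  assumes "finite F" "\<forall>e\<in>F. \<exists>u v. e = {u, v} \<and> u \<noteq> v"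
  shows "\<exists>D \<tau>. bij_betw undirected D F \<and> labeling D \<tau> \<and>
           (\<forall>u. vertex_sum D \<tau> u \<ge> - int (card F)) \<and> vertex_sum D \<tau> z \<ge> 0"
  using assms
proof (induction F arbitrary: z rule: finite_remove_induct)
  case empty
  show ?case by (intro exI[of _ "{}"]) (simp add: vertex_sum_def bij_betw_def)
next
  case (remove F)
  obtain w y where wy: "{w, y} \<in> F" "w \<noteq> y" and y_z: "(\<exists>e\<in>F. z \<in> e) \<Longrightarrow> y = z"
    using ex_edge_towards[OF remove.hyps(2) remove.prems] by blast
  have "\<forall>e\<in>F - {{w, y}}. \<exists>u v. e = {u, v} \<and> u \<noteq> v" using remove.prems by blast
  from remove.IH[OF wy(1) this, of w] obtain D \<tau> where D:
    "bij_betw undirected D (F - {{w, y}})" "labeling D \<tau>"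
    "\<forall>u. vertex_sum D \<tau> u \<ge> - int (card (F - {{w, y}}))" "vertex_sum D \<tau> w \<ge> 0"
    by blast
  note insert_arc = labeled_orientation_insert_arc[OF remove.hyps(1) wy D(1,2)]
  let ?D = "insert (w, y) D" and ?\<tau> = "\<tau>((w, y) := card F)"
  have "0 < card F" using remove.hyps(1) wy(1) card_gt_0_iff by blast
  then have card: "int (card (F - {{w, y}})) = int (card F) - 1"
    using card_Diff_singleton[OF wy(1)] by simp
  have "vertex_sum ?D ?\<tau> u \<ge> - int (card F)" for u
    using insert_arc(3)[of u] D(3)[rule_format, of u] D(4) card by (cases "u = w") auto
  moreover have "vertex_sum ?D ?\<tau> z \<ge> 0"
  proof (cases "\<exists>e\<in>F. z \<in> e")
    case True
    then show ?thesis using insert_arc(3)[of z] D(3)[rule_format, of z] card wy(2) y_z by auto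
  next
    case False
    then have "vertex_sum ?D ?\<tau> z = 0"
      using insert_arc(1) by (intro vertex_sum_not_incident) (force simp: bij_betw_def)
    then show ?thesis by simp
  qed
  ultimately show ?case using insert_arc(1,2) by blast
qed

lemma bij_betw_concat_intervals:
  assumes "bij_betw f A {n + 1..n + card A}" "bij_betw g B {n + card A + 1..n + card A + card B}"
    and "A \<inter> B = {}" "finite A" "finite B"
  shows "bij_betw (\<lambda>a. if a \<in> A then f a else g a) (A \<union> B) {n + 1..n + card (A \<union> B)}"
proof -
  have "bij_betw (\<lambda>a. if a \<in> A then f a else g a) (A \<union> B)
          ({n + 1..n + card A} \<union> {n + card A + 1..n + card A + card B})"
    by (rule bij_betw_disjoint_Un[OF assms(1-3)]) auto
  moreover have "card (A \<union> B) = card A + card B" using assms(3-5) by (simp add: card_Un_disjoint)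
  moreover have "{n + 1..n + card A} \<union> {n + card A + 1..n + card A + card B}
      = {n + 1..n + (card A + card B)}" by auto
  ultimately show ?thesis by simp
qed

lemma sum_less_if_labels_above:
  fixes \<mu> :: "'b \<Rightarrow> nat"
  assumes "finite B" "B \<noteq> {}" "card A \<le> card B" "\<forall>a\<in>A. \<mu> a \<le> m" "\<forall>b\<in>B. m < \<mu> b"
  shows "(\<Sum>a\<in>A. int (\<mu> a)) < (\<Sum>b\<in>B. int (\<mu> b))"
proof -
  have "(\<Sum>a\<in>A. int (\<mu> a)) \<le> int (card A) * int m"
    using sum_bounded_above[of A "\<lambda>a. int (\<mu> a)" "int m"] assms(4) by simp
  also have "\<dots> \<le> int (card B) * int m" using assms(3) by (simp add: mult_right_mono)
  also have "\<dots> < int (card B) * (int m + 1)" using assms(1,2) card_gt_0_iff[of B] by simp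
  also have "\<dots> \<le> (\<Sum>b\<in>B. int (\<mu> b))"
    using sum_bounded_below[of B "int m + 1" "\<lambda>b. int (\<mu> b)"] assms(5) by fastforce
  finally show ?thesis .
qed

lemma finite_comonotone_ex_greatest:
  fixes \<kappa> :: "'v \<Rightarrow> 'k::linorder" and c :: "'v \<Rightarrow> 'c::linorder"
  assumes "finite S" "S \<noteq> {}"
    and comono: "\<forall>v\<in>S. \<forall>w\<in>S. (\<kappa> v \<le> \<kappa> w \<and> c v \<le> c w) \<or> (\<kappa> w \<le> \<kappa> v \<and> c w \<le> c v)"
  shows "\<exists>v\<in>S. \<forall>w\<in>S. \<kappa> w \<le> \<kappa> v \<and> c w \<le> c v"
proof -
  define S1 where "S1 = {v\<in>S. \<kappa> v = Max (\<kappa> ` S)}"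
  have "Max (\<kappa> ` S) \<in> \<kappa> ` S" using assms(1,2) by simp
  then have "finite S1" "S1 \<noteq> {}" using assms(1) unfolding S1_def by auto
  then have "Max (c ` S1) \<in> c ` S1" by simp
  then obtain v where v: "v \<in> S1" "c v = Max (c ` S1)" by auto
  have "\<kappa> w \<le> \<kappa> v \<and> c w \<le> c v" if w: "w \<in> S" for w
  proof (cases "w \<in> S1")
    case True
    then show ?thesis using v \<open>finite S1\<close> unfolding S1_def by auto
  next
    case False
    then have "\<kappa> w < \<kappa> v" using v(1) w assms(1) unfolding S1_def
      by (metis (mono_tags, lifting) Max_ge finite_imageI image_eqI mem_Collect_eq order_less_le)
    then show ?thesis using comono w v(1) unfolding S1_def by force
  qed
  then show ?thesis using v(1) unfolding S1_def by blast
qed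

text \<open>Blocks are labelled in increasing order of \<open>(\<kappa>, card)\<close>; a block lying entirely above
  the previous ones then has the strictly largest label sum.\<close>
lemma exists_block_labels:
  fixes \<kappa> :: "'v \<Rightarrow> int" and A :: "'v \<Rightarrow> 'b set"
  assumes "finite S"
    and "\<forall>v\<in>S. finite (A v) \<and> A v \<noteq> {}"
    and "\<forall>v\<in>S. \<forall>w\<in>S. v \<noteq> w \<longrightarrow> A v \<inter> A w = {}"
    and "\<forall>v\<in>S. \<forall>w\<in>S. (\<kappa> v \<le> \<kappa> w \<and> card (A v) \<le> card (A w)) \<or>
                       (\<kappa> w \<le> \<kappa> v \<and> card (A w) \<le> card (A v))"
  shows "\<exists>\<mu>. bij_betw \<mu> (\<Union>(A ` S)) {n + 1..n + card (\<Union>(A ` S))} \<and>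
             inj_on (\<lambda>v. \<kappa> v + (\<Sum>a\<in>A v. int (\<mu> a))) S"
  using assms
proof (induction S rule: finite_remove_induct)
  case empty
  show ?case unfolding bij_betw_def by (rule exI[of _ "\<lambda>_. 0"]) simp
next
  case (remove S)
  obtain v where v: "v \<in> S" and greatest: "\<forall>w\<in>S. \<kappa> w \<le> \<kappa> v \<and> card (A w) \<le> card (A v)"
    using finite_comonotone_ex_greatest[OF remove.hyps(1,2) remove.prems(3)] by blast
  define U0 where "U0 = \<Union>(A ` (S - {v}))"
  define m where "m = n + card U0"
  obtain \<mu>0 where \<mu>0: "bij_betw \<mu>0 U0 {n + 1..m}"
    and inj0: "inj_on (\<lambda>w. \<kappa> w + (\<Sum>a\<in>A w. int (\<mu>0 a))) (S - {v})"
    using remove.IH[OF v] remove.prems unfolding U0_def m_def by blast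
  have Av: "finite (A v)" "A v \<noteq> {}" using remove.prems(1) v by auto
  have U0: "finite U0" "U0 \<inter> A v = {}"
    using remove.hyps(1) remove.prems(1,2) v unfolding U0_def by auto
  have "card (A v) = card {m + 1..m + card (A v)}" by simp
  then obtain g where g: "bij_betw g (A v) {m + 1..m + card (A v)}"
    using bij_betw_iff_card[OF Av(1)] by (metis finite_atLeastAtMost)
  define \<mu> where "\<mu> a = (if a \<in> U0 then \<mu>0 a else g a)" for a
  have "U0 \<union> A v = \<Union>(A ` S)" using v unfolding U0_def by blast
  moreover have "bij_betw \<mu> (U0 \<union> A v) {n + 1..n + card (U0 \<union> A v)}"
    using bij_betw_concat_intervals[OF _ _ U0(2) U0(1) Av(1)] \<mu>0 g unfolding \<mu>_def m_def by simp
  ultimately have bij: "bij_betw \<mu> (\<Union>(A ` S)) {n + 1..n + card (\<Union>(A ` S))}" by simp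
  define f where "f w = \<kappa> w + (\<Sum>a\<in>A w. int (\<mu> a))" for w
  have f_old: "f w = \<kappa> w + (\<Sum>a\<in>A w. int (\<mu>0 a))" if "w \<in> S - {v}" for w
    unfolding f_def \<mu>_def using that U0_def by (intro arg_cong2[where f="(+)"] sum.cong) auto
  have f_less: "f w < f v" if w: "w \<in> S - {v}" for w
  proof -
    have "\<forall>a\<in>A w. \<mu> a \<le> m" using w bij_betwE[OF \<mu>0] unfolding U0_def \<mu>_def by fastforce
    moreover have "\<forall>b\<in>A v. m < \<mu> b" using U0(2) bij_betwE[OF g] unfolding \<mu>_def by fastforce
    ultimately have "(\<Sum>a\<in>A w. int (\<mu> a)) < (\<Sum>b\<in>A v. int (\<mu> b))"
      using sum_less_if_labels_above[OF Av] greatest w by blast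
    then show ?thesis using greatest w unfolding f_def by fastforce
  qed
  have "inj_on f (S - {v})" using inj0 f_old by (simp add: inj_on_def)
  moreover have "f v \<notin> f ` (S - {v})" using f_less by fastforce
  ultimately have "inj_on f (insert v (S - {v}))"
    using inj_on_insert[of f v "S - {v}"] by simp
  then have "inj_on f S" using v by (simp add: insert_absorb)
  then show ?case using bij unfolding f_def by blast
qed

lemma vertex_sum_Un_blocks:
  fixes A :: "'a \<Rightarrow> ('a \<times> 'a) set"
  assumes "finite D" "finite S" "\<forall>v\<in>S. finite (A v)" "D \<inter> \<Union>(A ` S) = {}"
    and shape: "\<forall>v\<in>S. \<forall>a\<in>A v.
      if inward then snd a = v \<and> fst a \<notin> S else fst a = v \<and> snd a \<notin> S"
    and w: "w \<in> S"
  shows "vertex_sum (D \<union> \<Union>(A ` S)) \<tau> w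
       = vertex_sum D \<tau> w + (if inward then 1 else -1) * (\<Sum>a\<in>A w. int (\<tau> a))"
proof -
  let ?U = "\<Union>(A ` S)"
  have U_sum: "vertex_sum ?U \<tau> w = (if inward then 1 else -1) * (\<Sum>a\<in>A w. int (\<tau> a))"
  proof (cases inward)
    case True
    with shape have "\<forall>v\<in>S. \<forall>a\<in>A v. snd a = v \<and> fst a \<notin> S" by simp
    then have h: "{a\<in>?U. snd a = w} = A w" "{a\<in>?U. fst a = w} = {}" using w by (auto, fastforce)
    show ?thesis using True unfolding vertex_sum_def h by simp
  next
    case False
    with shape have "\<forall>v\<in>S. \<forall>a\<in>A v. fst a = v \<and> snd a \<notin> S" by simp
    then have h: "{a\<in>?U. fst a = w} = A w" "{a\<in>?U. snd a = w} = {}" using w by (auto, fastforce)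
    show ?thesis using False unfolding vertex_sum_def h by simp
  qed
  have "finite ?U" using assms(2,3) by blast
  then have "vertex_sum (D \<union> ?U) \<tau> w = vertex_sum D \<tau> w + vertex_sum ?U \<tau> w"
    by (rule vertex_sum_Un_disjoint[OF assms(1) _ assms(4)])
  then show ?thesis unfolding U_sum .
qed

text \<open>After adding the blocks, \<open>\<sigma> s(v)\<close> is \<open>\<sigma> s\<^sub>D(v)\<close> plus the labels of \<open>A v\<close>, so the block
  labelling applies with \<open>\<kappa> v = \<sigma> s\<^sub>D(v)\<close>.\<close>
lemma extend_labeling_inj_on_vertex_sum:
  fixes D :: "('a \<times> 'a) set" and A :: "'a \<Rightarrow> ('a \<times> 'a) set" and inward :: bool
  defines "\<sigma> \<equiv> if inward then 1 else -1 :: int"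
  assumes "finite D" "labeling D \<tau>" "finite S"
    and A: "\<forall>v\<in>S. finite (A v) \<and> A v \<noteq> {} \<and> A v \<inter> D = {}"
    and A_disjoint: "\<forall>v\<in>S. \<forall>w\<in>S. v \<noteq> w \<longrightarrow> A v \<inter> A w = {}"
    and shape: "\<forall>v\<in>S. \<forall>a\<in>A v.
      if inward then snd a = v \<and> fst a \<notin> S else fst a = v \<and> snd a \<notin> S"
    and comono: "\<forall>v\<in>S. \<forall>w\<in>S.
      (\<sigma> * vertex_sum D \<tau> v \<le> \<sigma> * vertex_sum D \<tau> w \<and> card (A v) \<le> card (A w)) \<or>
      (\<sigma> * vertex_sum D \<tau> w \<le> \<sigma> * vertex_sum D \<tau> v \<and> card (A w) \<le> card (A v))"
  shows "\<exists>\<tau>'. labeling (D \<union> \<Union>(A ` S)) \<tau>' \<and> (\<forall>a\<in>D. \<tau>' a = \<tau> a) \<and>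
              (\<forall>a\<in>\<Union>(A ` S). card D < \<tau>' a) \<and> inj_on (vertex_sum (D \<union> \<Union>(A ` S)) \<tau>') S"
proof -
  let ?U = "\<Union>(A ` S)"
  obtain \<mu> where \<mu>: "bij_betw \<mu> ?U {card D + 1..card D + card ?U}"
    and inj: "inj_on (\<lambda>v. \<sigma> * vertex_sum D \<tau> v + (\<Sum>a\<in>A v. int (\<mu> a))) S"
    using exists_block_labels[OF assms(4) _ A_disjoint comono] A by blast
  define \<tau>' where "\<tau>' a = (if a \<in> D then \<tau> a else \<mu> a)" for a
  have disj: "D \<inter> ?U = {}" using A by blast
  have "finite ?U" using assms(4) A by blast
  then have lab: "labeling (D \<union> ?U) \<tau>'"
    using bij_betw_concat_intervals[of \<tau> D 0 \<mu> ?U] assms(2,3) \<mu> disj unfolding \<tau>'_def by simp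
  have new: "\<forall>a\<in>?U. card D < \<tau>' a"
    using disj bij_betwE[OF \<mu>] unfolding \<tau>'_def by fastforce
  have "\<sigma> * vertex_sum (D \<union> ?U) \<tau>' w = \<sigma> * vertex_sum D \<tau> w + (\<Sum>a\<in>A w. int (\<mu> a))"
    if w: "w \<in> S" for w
  proof -
    have "vertex_sum D \<tau>' w = vertex_sum D \<tau> w" unfolding \<tau>'_def by (rule vertex_sum_cong) simp
    moreover have "(\<Sum>a\<in>A w. int (\<tau>' a)) = (\<Sum>a\<in>A w. int (\<mu> a))"
      using w A unfolding \<tau>'_def by (intro sum.cong) auto
    ultimately show ?thesis
      using vertex_sum_Un_blocks[OF assms(2,4) _ disj shape w, of \<tau>'] A
      unfolding \<sigma>_def by (auto simp: algebra_simps)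
  qed
  then have "inj_on (\<lambda>w. \<sigma> * vertex_sum (D \<union> ?U) \<tau>' w) S"
    using inj by (simp add: inj_on_def)
  then have "inj_on (vertex_sum (D \<union> ?U) \<tau>') S" by (simp add: inj_on_def)
  moreover have "\<forall>a\<in>D. \<tau>' a = \<tau> a" unfolding \<tau>'_def by simp
  ultimately show ?thesis using lab new by blast
qed

lemma inj_on_undirected_if_subset_Times:
  assumes "P \<subseteq> T \<times> H" "T \<inter> H = {}"
  shows "inj_on undirected P"
proof (rule inj_onI)
  fix a b assume "a \<in> P" "b \<in> P" "undirected a = undirected b"
  with assms show "a = b" by (cases a, cases b) (fastforce simp: doubleton_eq_iff)
qed

lemma inj_on_Un_if_less:
  fixes f :: "'a \<Rightarrow> 'b::linorder"
  assumes "inj_on f A" "inj_on f B" "\<And>a b. a \<in> A \<Longrightarrow> b \<in> B \<Longrightarrow> f a < f b"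
  shows "inj_on f (A \<union> B)"
  unfolding inj_on_Un using assms by (fastforce dest: less_imp_neq)

lemma simple_graph_edgeD:
  assumes "simple_graph V E" "{a, b} \<in> E"
  shows "a \<noteq> b" "a \<in> V" "b \<in> V"
proof -
  obtain u v where "{a, b} = {u, v}" "u \<noteq> v" "u \<in> V" "v \<in> V"
    using assms unfolding simple_graph_def by blast
  then show "a \<noteq> b" "a \<in> V" "b \<in> V" by (auto simp: doubleton_eq_iff)
qed

locale indep_complement =
  fixes V :: "'a set" and E :: "'a set set" and x :: 'a
  assumes simple: "simple_graph V E"
    and connected: "connected_graph V E"
    and x_in_V: "x \<in> V"
    and degree_x: "degree E x = max_degree V E"
    and independent: "independent_set E (V - (neighbors E x \<union> {x}))"
begin

abbreviation N :: "'a set" where "N \<equiv> neighbors E x"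
abbreviation R :: "'a set" where "R \<equiv> V - (N \<union> {x})"

lemma finite_V: "finite V"
  using simple unfolding simple_graph_def by simp

lemma neighbors_subset_V: "neighbors E v \<subseteq> V"
  unfolding neighbors_def using simple_graph_edgeD(2)[OF simple] by blast

lemma finite_neighbors: "finite (neighbors E v)"
  using finite_subset[OF neighbors_subset_V finite_V] .

lemma x_notin_N: "x \<notin> N"
  unfolding neighbors_def using simple_graph_edgeD(1)[OF simple] by blast

lemma neighbors_R_subset_N:
  assumes "r \<in> R"
  shows "neighbors E r \<subseteq> N"
proof
  fix u assume "u \<in> neighbors E r"
  then have e: "{u, r} \<in> E" unfolding neighbors_def by simp
  then have "u \<in> V" using simple_graph_edgeD(2)[OF simple] by blast
  moreover have "u \<noteq> x" using e assms unfolding neighbors_def by (auto simp: insert_commute)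
  moreover have "u \<notin> R" using independent e assms unfolding independent_set_def by blast
  ultimately show "u \<in> N" by blast
qed

lemma neighbors_R_nonempty:
  assumes "r \<in> R"
  shows "neighbors E r \<noteq> {}"
proof -
  have "(r, x) \<in> {(a, b). {a, b} \<in> E}\<^sup>*"
    using connected assms x_in_V unfolding connected_graph_def by blast
  moreover have "r \<noteq> x" using assms by blast
  ultimately obtain y where "{r, y} \<in> E" by (auto elim: converse_rtranclE)
  then show ?thesis unfolding neighbors_def by (auto simp: insert_commute)
qed

lemma card_neighbors_le:
  assumes "v \<in> V"
  shows "card (neighbors E v) \<le> card N"
proof -
  have "degree E v \<le> max_degree V E" unfolding max_degree_def using finite_V assms by simp
  then show ?thesis using degree_x unfolding degree_def by simp
qed

lemma finite_E: "finite E"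
proof (rule finite_subset)
  show "E \<subseteq> Pow V"
  proof
    fix e assume "e \<in> E"
    then obtain u v where "e = {u, v}" "u \<in> V" "v \<in> V"
      using simple unfolding simple_graph_def by meson
    then show "e \<in> Pow V" by simp
  qed
qed (simp add: finite_V)

lemma exists_labeled_orientation_inside_N:
  "\<exists>D0 \<tau>. bij_betw undirected D0 {e \<in> E. e \<subseteq> N} \<and> labeling D0 \<tau> \<and>
          (\<forall>u. - int (card D0) \<le> vertex_sum D0 \<tau> u)"
proof -
  let ?I = "{e \<in> E. e \<subseteq> N}"
  have finite_I: "finite ?I" using finite_E by simp
  have "\<forall>e\<in>E. \<exists>u v. e = {u, v} \<and> u \<noteq> v" using simple unfolding simple_graph_def by meson
  then have "\<forall>e\<in>?I. \<exists>u v. e = {u, v} \<and> u \<noteq> v" by simp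
  from exists_labeled_orientation_vertex_sum_ge[OF finite_I this, of x]
  obtain D0 \<tau> where D0: "bij_betw undirected D0 ?I" "labeling D0 \<tau>"
    "\<forall>u. - int (card ?I) \<le> vertex_sum D0 \<tau> u"
    by blast
  moreover have "card D0 = card ?I" using bij_betw_same_card[OF D0(1)] .
  ultimately show ?thesis by (metis (no_types))
qed

lemma undirected_arcs_from_R_and_x:
  "undirected ` (Sigma R (neighbors E) \<union> {x} \<times> N) = {e \<in> E. \<not> e \<subseteq> N}"
proof (intro equalityI subsetI)
  fix e assume "e \<in> undirected ` (Sigma R (neighbors E) \<union> {x} \<times> N)"
  then obtain a where a: "a \<in> Sigma R (neighbors E) \<union> {x} \<times> N" "e = undirected a" by blast
  then have "snd a \<in> neighbors E (fst a)" "fst a \<notin> N" using x_notin_N by auto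
  then show "e \<in> {e \<in> E. \<not> e \<subseteq> N}"
    using a(2) unfolding neighbors_def by (auto simp: insert_commute)
next
  fix e assume e: "e \<in> {e \<in> E. \<not> e \<subseteq> N}"
  then obtain a b where ab: "e = {a, b}" "a \<in> V" "b \<in> V"
    using simple unfolding simple_graph_def by blast
  then obtain t u where tu: "e = {t, u}" "t \<in> R \<union> {x}" using e by blast
  then have "u \<in> neighbors E t" using e unfolding neighbors_def by (auto simp: insert_commute)
  then have "(t, u) \<in> Sigma R (neighbors E) \<union> {x} \<times> N" using tu(2) by blast
  moreover have "e = undirected (t, u)" using tu(1) by simp
  ultimately show "e \<in> undirected ` (Sigma R (neighbors E) \<union> {x} \<times> N)" by (rule rev_image_eqI)
qed

lemma bij_betw_undirected_staged_arcs:
  assumes "bij_betw undirected DI {e \<in> E. e \<subseteq> N}"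
  shows "bij_betw undirected (DI \<union> Sigma R (neighbors E) \<union> {x} \<times> N) E"
proof -
  have "Sigma R (neighbors E) \<subseteq> R \<times> N" by (rule Sigma_mono) (simp_all add: neighbors_R_subset_N)
  then have "Sigma R (neighbors E) \<union> {x} \<times> N \<subseteq> (R \<union> {x}) \<times> N" by blast
  moreover have "(R \<union> {x}) \<inter> N = {}" using x_notin_N by blast
  ultimately have "inj_on undirected (Sigma R (neighbors E) \<union> {x} \<times> N)"
    by (rule inj_on_undirected_if_subset_Times)
  then have "bij_betw undirected (Sigma R (neighbors E) \<union> {x} \<times> N) {e \<in> E. \<not> e \<subseteq> N}"
    unfolding bij_betw_def using undirected_arcs_from_R_and_x by blast
  from bij_betw_combine[OF assms this]
  have "bij_betw undirected (DI \<union> (Sigma R (neighbors E) \<union> {x} \<times> N))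
          ({e \<in> E. e \<subseteq> N} \<union> {e \<in> E. \<not> e \<subseteq> N})" by blast
  moreover have "{e \<in> E. e \<subseteq> N} \<union> {e \<in> E. \<not> e \<subseteq> N} = E" by blast
  ultimately show ?thesis by (simp add: Un_assoc)
qed

lemma exists_labeling_inj_on_R:
  assumes "finite D" "labeling D \<tau>" "D \<subseteq> N \<times> N"
  shows "\<exists>\<tau>'. labeling (D \<union> Sigma R (neighbors E)) \<tau>' \<and> (\<forall>a\<in>D. \<tau>' a = \<tau> a) \<and>
              inj_on (vertex_sum (D \<union> Sigma R (neighbors E)) \<tau>') R"
proof -
  define A where "A r = {r} \<times> neighbors E r" for r
  have "Sigma R (neighbors E) = \<Union>(A ` R)" unfolding A_def by blast
  moreover have "vertex_sum D \<tau> r = 0" if "r \<in> R" for r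
    using that assms(3) by (intro vertex_sum_not_incident) (auto simp: mem_Times_iff)
  moreover have "\<forall>r\<in>R. finite (A r) \<and> A r \<noteq> {} \<and> A r \<inter> D = {}"
    unfolding A_def using finite_neighbors neighbors_R_nonempty assms(3) by blast
  moreover have "\<forall>r\<in>R. \<forall>a\<in>A r. fst a = r \<and> snd a \<notin> R"
    unfolding A_def using neighbors_R_subset_N by fastforce
  ultimately show ?thesis
    using extend_labeling_inj_on_vertex_sum[OF assms(1,2), of R A False] finite_V
    unfolding A_def by (auto simp: linear)
qed

lemma exists_labeling_inj_on_N:
  assumes "finite D" "labeling D \<tau>" "D \<inter> {x} \<times> N = {}"
  shows "\<exists>\<tau>'. labeling (D \<union> {x} \<times> N) \<tau>' \<and> (\<forall>a\<in>D. \<tau>' a = \<tau> a) \<and>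
              (\<forall>a\<in>{x} \<times> N. card D < \<tau>' a) \<and> inj_on (vertex_sum (D \<union> {x} \<times> N) \<tau>') N"
proof -
  define A :: "'a \<Rightarrow> ('a \<times> 'a) set" where "A v = {(x, v)}" for v
  have "{x} \<times> N = \<Union>(A ` N)" unfolding A_def by blast
  moreover have "\<forall>v\<in>N. finite (A v) \<and> A v \<noteq> {} \<and> A v \<inter> D = {}"
    unfolding A_def using assms(3) by blast
  moreover have "\<forall>v\<in>N. \<forall>a\<in>A v. snd a = v \<and> fst a \<notin> N"
    unfolding A_def using x_notin_N by simp
  ultimately show ?thesis
    using extend_labeling_inj_on_vertex_sum[OF assms(1,2), of N A True] finite_neighbors
    unfolding A_def by (auto simp: linear)
qed

end

text \<open>\<open>D0\<close> orients the edges inside \<open>N\<close>; the arcs leaving \<open>R\<close> get the next labels and the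
  arcs leaving \<open>x\<close> the largest ones.\<close>
locale staged_labeling = indep_complement +
  fixes D0 :: "('a \<times> 'a) set" and \<tau> :: "'a \<times> 'a \<Rightarrow> nat"
  assumes D0_subset: "D0 \<subseteq> N \<times> N" and finite_D0: "finite D0"
    and D0_lower: "\<forall>u. - int (card D0) \<le> vertex_sum D0 \<tau> u"
    and labeling_D1: "labeling (D0 \<union> Sigma R (neighbors E)) \<tau>"
    and inj_on_R: "inj_on (vertex_sum (D0 \<union> Sigma R (neighbors E)) \<tau>) R"
    and labeling_D2: "labeling (D0 \<union> Sigma R (neighbors E) \<union> {x} \<times> N) \<tau>"
    and x_labels_large: "\<forall>a\<in>{x} \<times> N. card (D0 \<union> Sigma R (neighbors E)) < \<tau> a"
    and inj_on_N: "inj_on (vertex_sum (D0 \<union> Sigma R (neighbors E) \<union> {x} \<times> N) \<tau>) N"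
begin

abbreviation D1 :: "('a \<times> 'a) set" where "D1 \<equiv> D0 \<union> Sigma R (neighbors E)"
abbreviation D2 :: "('a \<times> 'a) set" where "D2 \<equiv> D1 \<union> {x} \<times> N"

lemma finite_D1: "finite D1"
  using finite_D0 finite_V finite_neighbors by blast

lemma D1_disjoint_x_arcs: "D1 \<inter> {x} \<times> N = {}"
  using D0_subset x_notin_N by blast

lemma vertex_sum_D2_R:
  assumes "r \<in> R"
  shows "vertex_sum D2 \<tau> r = vertex_sum D1 \<tau> r"
    and "vertex_sum D2 \<tau> r = - (\<Sum>a\<in>{r} \<times> neighbors E r. int (\<tau> a))"
proof -
  have "vertex_sum ({x} \<times> N) \<tau> r = 0" using assms by (intro vertex_sum_not_incident) auto
  then show "vertex_sum D2 \<tau> r = vertex_sum D1 \<tau> r"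
    using vertex_sum_Un_disjoint[OF finite_D1 _ D1_disjoint_x_arcs] finite_neighbors by simp
  have heads: "{a \<in> D2. snd a = r} = {}"
    using assms D0_subset neighbors_R_subset_N by fastforce
  have tails: "{a \<in> D2. fst a = r} = {r} \<times> neighbors E r"
    using assms D0_subset by fastforce
  show "vertex_sum D2 \<tau> r = - (\<Sum>a\<in>{r} \<times> neighbors E r. int (\<tau> a))"
    unfolding vertex_sum_def heads tails by simp
qed

lemma vertex_sum_D2_R_bounds:
  assumes "r \<in> R"
  shows "- (int (card N) * int (card D1)) \<le> vertex_sum D2 \<tau> r" "vertex_sum D2 \<tau> r \<le> -1"
proof -
  let ?A = "{r} \<times> neighbors E r"
  have lab: "1 \<le> \<tau> a \<and> \<tau> a \<le> card D1" if "a \<in> ?A" for a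
  proof -
    have "a \<in> D1" using that assms by blast
    then show ?thesis using bij_betwE[OF labeling_D1] by fastforce
  qed
  have "card ?A = card (neighbors E r)" by (simp add: card_cartesian_product_singleton)
  then have card_A: "1 \<le> card ?A" "card ?A \<le> card N"
    using neighbors_R_nonempty[OF assms] finite_neighbors card_neighbors_le assms
    by (auto simp: Suc_le_eq card_gt_0_iff)
  have "(\<Sum>a\<in>?A. int (\<tau> a)) \<le> int (card ?A) * int (card D1)"
    using sum_bounded_above[of ?A "\<lambda>a. int (\<tau> a)" "int (card D1)"] lab by simp
  also have "\<dots> \<le> int (card N) * int (card D1)" using card_A(2) by (simp add: mult_right_mono)
  finally show "- (int (card N) * int (card D1)) \<le> vertex_sum D2 \<tau> r"
    using vertex_sum_D2_R(2)[OF assms] by simp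
  have "int (card ?A) \<le> (\<Sum>a\<in>?A. int (\<tau> a))"
    using sum_bounded_below[of ?A 1 "\<lambda>a. int (\<tau> a)"] lab by simp
  then show "vertex_sum D2 \<tau> r \<le> -1" using vertex_sum_D2_R(2)[OF assms] card_A(1) by simp
qed

lemma vertex_sum_D2_N_pos:
  assumes "v \<in> N"
  shows "1 \<le> vertex_sum D2 \<tau> v"
proof -
  have v: "v \<noteq> x" "v \<notin> R" using assms x_notin_N by auto
  have heads: "{a \<in> {x} \<times> N. snd a = v} = {(x, v)}" and tails: "{a \<in> {x} \<times> N. fst a = v} = {}"
    using assms v by auto
  have "vertex_sum ({x} \<times> N) \<tau> v = int (\<tau> (x, v))"
    unfolding vertex_sum_def heads tails by simp
  moreover have "card D1 < \<tau> (x, v)" by (rule x_labels_large[THEN bspec]) (simp add: assms)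
  moreover have "vertex_sum D2 \<tau> v = vertex_sum D1 \<tau> v + vertex_sum ({x} \<times> N) \<tau> v"
    using vertex_sum_Un_disjoint[OF finite_D1 _ D1_disjoint_x_arcs] finite_neighbors by simp
  moreover have "vertex_sum D1 \<tau> v = vertex_sum D0 \<tau> v + vertex_sum (Sigma R (neighbors E)) \<tau> v"
  proof (rule vertex_sum_Un_disjoint[OF finite_D0])
    show "finite (Sigma R (neighbors E))" using finite_D1 by blast
    show "D0 \<inter> Sigma R (neighbors E) = {}" using D0_subset by blast
  qed
  moreover have "0 \<le> vertex_sum (Sigma R (neighbors E)) \<tau> v"
    using v by (intro vertex_sum_nonneg_if_no_tail) auto
  moreover have "card D0 \<le> card D1" using finite_D1 by (intro card_mono) auto
  ultimately show ?thesis using D0_lower by (smt (verit) of_nat_less_iff of_nat_mono)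
qed

lemma vertex_sum_D2_x: "vertex_sum D2 \<tau> x \<le> - (int (card N) * (int (card D1) + 1))"
proof -
  have heads: "{a \<in> D2. snd a = x} = {}"
    using D0_subset neighbors_R_subset_N x_notin_N by fastforce
  have tails: "{a \<in> D2. fst a = x} = {x} \<times> N"
    using D0_subset x_notin_N by fastforce
  have "int (card D1) + 1 \<le> int (\<tau> a)" if "a \<in> {x} \<times> N" for a
    using x_labels_large that by fastforce
  then have "int (card ({x} \<times> N)) * (int (card D1) + 1) \<le> (\<Sum>a\<in>{x} \<times> N. int (\<tau> a))"
    using sum_bounded_below[of "{x} \<times> N" "int (card D1) + 1" "\<lambda>a. int (\<tau> a)"] by simp
  then show ?thesis
    unfolding vertex_sum_def heads tails by (simp add: card_cartesian_product_singleton)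
qed

lemma inj_on_V: "inj_on (vertex_sum D2 \<tau>) V"
proof -
  have "vertex_sum D2 \<tau> x < vertex_sum D2 \<tau> r" if "r \<in> R" for r
  proof -
    have "card N \<noteq> 0"
      using neighbors_R_nonempty[OF that] neighbors_R_subset_N[OF that] finite_neighbors by auto
    then show ?thesis using vertex_sum_D2_x vertex_sum_D2_R_bounds(1)[OF that]
      by (simp add: algebra_simps)
  qed
  moreover have "inj_on (vertex_sum D2 \<tau>) R"
    using inj_on_R vertex_sum_D2_R(1) by (simp add: inj_on_def)
  ultimately have inj_xR: "inj_on (vertex_sum D2 \<tau>) ({x} \<union> R)"
    by (intro inj_on_Un_if_less) auto
  have less_N: "vertex_sum D2 \<tau> u < vertex_sum D2 \<tau> v" if "u \<in> {x} \<union> R" "v \<in> N" for u v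
    using that vertex_sum_D2_x vertex_sum_D2_R_bounds(2) vertex_sum_D2_N_pos[OF that(2)]
    by (smt (verit) UnE mult_nonneg_nonneg of_nat_0_le_iff singletonD)
  have "inj_on (vertex_sum D2 \<tau>) ({x} \<union> R \<union> N)"
    by (rule inj_on_Un_if_less[OF inj_xR inj_on_N less_N])
  moreover have "{x} \<union> R \<union> N = V" using x_in_V neighbors_subset_V by blast
  ultimately show ?thesis by (simp only:)
qed

end

context indep_complement
begin

lemma exists_staged_labeling:
  "\<exists>D0 \<tau>. bij_betw undirected D0 {e \<in> E. e \<subseteq> N} \<and> staged_labeling V E x D0 \<tau>"
proof -
  obtain D0 \<tau>0 where D0: "bij_betw undirected D0 {e \<in> E. e \<subseteq> N}" "labeling D0 \<tau>0"
    "\<forall>u. - int (card D0) \<le> vertex_sum D0 \<tau>0 u"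
    using exists_labeled_orientation_inside_N by blast
  have "finite {e \<in> E. e \<subseteq> N}" using finite_E by simp
  then have finite_D0: "finite D0" using bij_betw_finite D0(1) by blast
  have D0_subset: "D0 \<subseteq> N \<times> N" using bij_betwE[OF D0(1)] by (auto simp: mem_Times_iff)
  obtain \<tau>1 where \<tau>1: "labeling (D0 \<union> Sigma R (neighbors E)) \<tau>1" "\<forall>a\<in>D0. \<tau>1 a = \<tau>0 a"
    "inj_on (vertex_sum (D0 \<union> Sigma R (neighbors E)) \<tau>1) R"
    using exists_labeling_inj_on_R[OF finite_D0 D0(2) D0_subset] by blast
  have "finite (D0 \<union> Sigma R (neighbors E))" using finite_D0 finite_V finite_neighbors by blast
  moreover have "(D0 \<union> Sigma R (neighbors E)) \<inter> {x} \<times> N = {}" using D0_subset x_notin_N by blast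
  ultimately obtain \<tau> where \<tau>: "labeling (D0 \<union> Sigma R (neighbors E) \<union> {x} \<times> N) \<tau>"
    "\<forall>a\<in>D0 \<union> Sigma R (neighbors E). \<tau> a = \<tau>1 a"
    "\<forall>a\<in>{x} \<times> N. card (D0 \<union> Sigma R (neighbors E)) < \<tau> a"
    "inj_on (vertex_sum (D0 \<union> Sigma R (neighbors E) \<union> {x} \<times> N) \<tau>) N"
    using exists_labeling_inj_on_N[OF _ \<tau>1(1)] by blast
  have "vertex_sum D0 \<tau> u = vertex_sum D0 \<tau>0 u" for u
  proof (rule vertex_sum_cong)
    fix a assume "a \<in> D0"
    then show "\<tau> a = \<tau>0 a" using \<tau>(2) \<tau>1(2) by (metis UnI1)
  qed
  moreover have "vertex_sum (D0 \<union> Sigma R (neighbors E)) \<tau> = vertex_sum (D0 \<union> Sigma R (neighbors E)) \<tau>1"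
    by (rule ext, rule vertex_sum_cong) (use \<tau>(2) in blast)
  moreover have "labeling (D0 \<union> Sigma R (neighbors E)) \<tau>"
    by (rule bij_betw_cong[THEN iffD2, OF _ \<tau>1(1)]) (use \<tau>(2) in blast)
  ultimately have "staged_labeling V E x D0 \<tau>"
    using D0 D0_subset finite_D0 \<tau> \<tau>1(3) by unfold_locales simp_all
  then show ?thesis using D0(1) by blast
qed

theorem has_antimagic_orientation: "has_antimagic_orientation V E"
proof -
  obtain D0 \<tau> where bij: "bij_betw undirected D0 {e \<in> E. e \<subseteq> N}"
    and staged: "staged_labeling V E x D0 \<tau>"
    using exists_staged_labeling by blast
  interpret staged_labeling V E x D0 \<tau> by (fact staged)
  have "is_orientation E D2"
    by (rule is_orientation_if_bij_betw[OF bij_betw_undirected_staged_arcs[OF bij]])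
  then show ?thesis
    unfolding has_antimagic_orientation_def antimagic_labeling_def
    using labeling_D2 inj_on_V by blast
qed

end

theorem lemma2p2:
  fixes V :: "'a set" and E :: "'a set set" and x :: 'a
  assumes "simple_graph V E"
    and "connected_graph V E"
    and "x \<in> V"
    and "degree E x = max_degree V E"
    and "max_degree V E + 2 \<le> card V"
    and "independent_set E (V - (neighbors E x \<union> {x}))"
  shows "has_antimagic_orientation V E"
proof -
  interpret indep_complement V E x
    using assms(1-4,6) by unfold_locales
  show ?thesis by (rule has_antimagic_orientation)
qed

end
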